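(* Let $\rho\in\mathcal{D}(\mathbb{C}^2)$ be a known nominal qubit state and $\alpha\in(0,1)$. Consider the one-sample quantum universal hypothesis testing problem: given $\sigma^{\otimes m}$ for an unknown $\sigma\in\mathcal{D}(\mathbb{C}^2)$, test $H_0:\sigma=\rho$ against $H_1:\sigma\neq\rho$. Then there exist decision rules $M_m$ (depending only on $\rho$, $\alpha$ and $m$, not on $\sigma$), using only independent measurements, such that for all sufficiently large $m$, $\alpha(M_m)\le\alpha$, and for every fixed $\sigma\neq\rho$ there is a constant $K$ (which may depend on $\rho,\sigma,\alpha$) such that for all sufficiently large $m$, $$\beta(M_m)\le\exp\!\left(-\frac{m\|\rho-\sigma\|_1^2}{54}+K m^{1/2}\right).$$
   Context: $\mathcal{D}(\mathcal{H})$ denotes the set of density operators on $\mathcal{H}$. A decision rule $M_m$ is a two-outcome POVM $\{E_0,E_1\}$ on $\mathcal{H}^{\otimes m}$ (outcome $0$: declare $H_0$; outcome $1$: declare $H_1$). "Independent measurements" means each of the $m$ copies is measured separately and the outcomes are classically processed. Type I error: $\alpha(M_m)=\mathrm{Tr}[\rho^{\otimes m}E_1]$; type II error (for the true state $\sigma$): $\beta(M_m)=\mathrm{Tr}[\sigma^{\otimes m}E_0]$. $\|X\|_1=\mathrm{Tr}\sqrt{X^\dagger X}$ is the trace norm. *)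

theory Defs
  imports "HOL-Analysis.Analysis"
begin

type_synonym qmat = "complex^2^2"

definition adj :: "qmat \<Rightarrow> qmat" where
  "adj A = (\<chi> i j. cnj (A $ j $ i))"

definition psd :: "qmat \<Rightarrow> bool" where
  "psd A \<longleftrightarrow> A = adj A \<and>
     (\<forall>v::complex^2. Im (\<Sum>i\<in>UNIV. cnj (v $ i) * (A *v v) $ i) = 0 \<and>
                      Re (\<Sum>i\<in>UNIV. cnj (v $ i) * (A *v v) $ i) \<ge> 0)"

definition density :: "qmat \<Rightarrow> bool" where
  "density A \<longleftrightarrow> psd A \<and> trace A = 1"

definition msqrt :: "qmat \<Rightarrow> qmat" where
  "msqrt A = (THE S. psd S \<and> S ** S = A)"

definition trace_norm :: "qmat \<Rightarrow> real" where
  "trace_norm X = Re (trace (msqrt (adj X ** X)))"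

text \<open>A decision rule on m copies using independent measurements:
  copy i (i < m) is measured with a finite-outcome POVM F i 0, ..., F i (ks i - 1);
  the outcome string o is classically processed by g (g o = True: declare H1).\<close>
type_synonym indep_rule = "(nat \<Rightarrow> nat) \<times> (nat \<Rightarrow> nat \<Rightarrow> qmat) \<times> ((nat \<Rightarrow> nat) \<Rightarrow> bool)"

definition is_indep_rule :: "nat \<Rightarrow> indep_rule \<Rightarrow> bool" where
  "is_indep_rule m M = (case M of (ks, F, g) \<Rightarrow>
     (\<forall>i<m. (\<forall>k<ks i. psd (F i k)) \<and> (\<Sum>k<ks i. F i k) = mat 1))"

text \<open>Probability (Born rule on the product state s^{\<otimes> m}, product measurement)
  that the rule outputs b.\<close>
definition out_prob :: "qmat \<Rightarrow> nat \<Rightarrow> indep_rule \<Rightarrow> bool \<Rightarrow> real" where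
  "out_prob s m M b = (case M of (ks, F, g) \<Rightarrow>
     (\<Sum>w\<in>{w \<in> PiE {..<m} (\<lambda>i. {..<ks i}). g w = b}.
        \<Prod>i<m. Re (trace (s ** F i (w i)))))"

text \<open>Type I error Tr[rho^{\<otimes> m} E_1] and type II error Tr[sigma^{\<otimes> m} E_0].\<close>
definition type1_err :: "qmat \<Rightarrow> nat \<Rightarrow> indep_rule \<Rightarrow> real" where
  "type1_err \<rho> m M = out_prob \<rho> m M True"

definition type2_err :: "qmat \<Rightarrow> nat \<Rightarrow> indep_rule \<Rightarrow> real" where
  "type2_err \<sigma> m M = out_prob \<sigma> m M False"

end

(* Every copy is measured with the six-outcome POVM that measures one of the Pauli observables
   Z, X, Y, chosen uniformly at random. Scoring the outcomes of observable a by +1 and -1 gives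
   i.i.d. scores with mean Tr (s P_a) / 3, a third of the a-th Bloch coordinate of the state s.
   The test rejects as soon as one of the three score sums deviates from its mean under rho by at
   least T sqrt m, where T = sqrt (2 ln (6 / alpha)); Hoeffding's inequality and a union bound give
   type I error at most 6 exp (-T^2/2) = alpha. For qubits ||rho - sigma||_1 is the Euclidean
   distance of the Bloch vectors, so some coordinate has a mean gap delta with
   ||rho - sigma||_1^2 <= 27 delta^2. Under sigma the corresponding score sum must then deviate
   from its own mean by m delta - T sqrt m, which by Hoeffding has probability at most
   2 exp (-(sqrt m delta - T)^2 / 2) <= exp (-m ||rho - sigma||_1^2 / 54 + K sqrt m). *)

theory Submission
  imports Defs "HOL-Probability.Probability"
begin

abbreviation qform :: "qmat \<Rightarrow> complex^2 \<Rightarrow> complex" where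
  "qform A v \<equiv> \<Sum>i\<in>UNIV. cnj (v $ i) * (A *v v) $ i"

lemmas qmat_entry_simps = vec_eq_iff forall_2 sum_2 matrix_matrix_mult_def matrix_vector_mult_def
  mat_def adj_def trace_def

definition outer :: "complex^2 \<Rightarrow> qmat" where
  "outer u = (\<chi> i j. u$i * cnj (u$j))"

lemma qform_outer: "qform (outer u) v = of_real ((cmod (\<Sum>i\<in>UNIV. cnj (v$i) * u$i))\<^sup>2)"
proof -
  define z where "z = (\<Sum>i\<in>UNIV. cnj (v$i) * u$i)"
  have "qform (outer u) v = z * cnj z"
    unfolding z_def outer_def matrix_vector_mult_def sum_2 by (simp add: algebra_simps)
  also have "\<dots> = of_real ((cmod z)\<^sup>2)"
    by (metis complex_norm_square of_real_power)
  finally show ?thesis by (simp add: z_def)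
qed

lemma psd_outer: "psd (outer u)"
  unfolding psd_def qform_outer by (simp add: outer_def adj_def vec_eq_iff)

lemma trace_mult_outer: "trace (A ** outer u) = qform A u"
  by (simp add: qmat_entry_simps outer_def algebra_simps)

lemma psd_hermitian: "psd A \<Longrightarrow> adj A = A"
  by (simp add: psd_def)

lemma psd_qform_nonneg: "psd A \<Longrightarrow> 0 \<le> Re (qform A v)"
  by (simp add: psd_def)

lemma hermitian_entry:
  assumes "adj A = A"
  shows "A$j$i = cnj (A$i$j)"
proof -
  have "adj A $ j $ i = cnj (A$i$j)"
    by (simp add: adj_def)
  then show ?thesis
    by (simp add: assms)
qed

lemma hermitian_diag_real: "adj A = A \<Longrightarrow> A$i$i = of_real (Re (A$i$i))"
  using hermitian_entry[of A i i] by (simp add: complex_eq_iff)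

lemma qform_axis: "qform A (axis i 1) = A$i$i"
  using exhaust_2[of i] by (auto simp: matrix_vector_mult_def axis_def sum_2)

lemma psd_diag_nonneg: "psd A \<Longrightarrow> 0 \<le> Re (A$i$i)"
  using psd_qform_nonneg[of A "axis i 1"] by (simp only: qform_axis)

lemma psd_offdiag_eq_0:
  assumes "psd A" "A$1$1 = 0" "A$2$2 = 0"
  shows "A$1$2 = 0"
proof -
  define b where "b = A$1$2"
  have "0 \<le> Re (qform A (vector [1, - cnj b]))"
    using assms(1) by (rule psd_qform_nonneg)
  then have "Re b * Re b + Im b * Im b \<le> 0"
    using assms hermitian_entry[OF psd_hermitian[OF assms(1)], of 2 1]
    by (simp add: qmat_entry_simps b_def algebra_simps)
  then show ?thesis
    by (simp add: b_def sum_squares_le_zero_iff complex_eq_iff)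
qed

lemma qform_scalar: "qform (mat (of_real c)) v = of_real (c * ((cmod (v$1))\<^sup>2 + (cmod (v$2))\<^sup>2))"
  by (simp add: qmat_entry_simps cmod_power2[unfolded power2_eq_square] complex_eq_iff
      algebra_simps power2_eq_square)

lemma psd_scalar: "0 \<le> c \<Longrightarrow> psd (mat (of_real c))"
  unfolding psd_def qform_scalar by (simp add: qmat_entry_simps)

lemma psd_sqrt_scalar_unique:
  assumes S: "psd S" and SS: "S ** S = mat (of_real (c\<^sup>2))" and c: "0 \<le> c"
  shows "S = mat (of_real c)"
proof -
  define a e b where "a = Re (S$1$1)" and "e = Re (S$2$2)" and "b = S$1$2"
  have hS: "adj S = S" using S by (rule psd_hermitian)
  have s11: "S$1$1 = of_real a" and s22: "S$2$2 = of_real e" and s21: "S$2$1 = cnj b"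
    unfolding a_def e_def b_def by (fact hermitian_diag_real[OF hS] hermitian_entry[OF hS])+
  have a0: "0 \<le> a" and e0: "0 \<le> e"
    using psd_diag_nonneg[OF S] by (simp_all add: a_def e_def)
  have bb: "b * cnj b = of_real ((cmod b)\<^sup>2)"
    by (rule complex_norm_square[symmetric])
  have "of_real (a\<^sup>2 + (cmod b)\<^sup>2) = (S ** S)$1$1"
    by (simp add: matrix_matrix_mult_def sum_2 s11 s21 b_def[symmetric] bb power2_eq_square)
  also have "\<dots> = of_real (c\<^sup>2)"
    using SS by (simp add: mat_def)
  finally have r11: "a\<^sup>2 + (cmod b)\<^sup>2 = c\<^sup>2"
    by (simp only: of_real_eq_iff)
  have "of_real (e\<^sup>2 + (cmod b)\<^sup>2) = (S ** S)$2$2"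
    by (simp add: matrix_matrix_mult_def sum_2 s22 s21 b_def[symmetric] bb power2_eq_square mult.commute)
  also have "\<dots> = of_real (c\<^sup>2)"
    using SS by (simp add: mat_def)
  finally have r22: "e\<^sup>2 + (cmod b)\<^sup>2 = c\<^sup>2"
    by (simp only: of_real_eq_iff)
  have "of_real (a + e) * b = (S ** S)$1$2"
    by (simp add: matrix_matrix_mult_def sum_2 s11 s22 b_def[symmetric] algebra_simps)
  also have "\<dots> = 0"
    using SS by (simp add: mat_def)
  finally have r12: "of_real (a + e) * b = 0"
    by simp
  have ae: "a = e"
    using r11 r22 a0 e0 by (metis add_right_cancel power2_eq_iff_nonneg)
  have b0: "b = 0"
  proof (cases "a = 0")
    case True
    then show ?thesis
      using psd_offdiag_eq_0[OF S] ae s11 s22 by (simp add: b_def)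
  next
    case False
    then show ?thesis using r12 ae a0 by simp
  qed
  have "a = c"
    using r11 a0 c by (simp add: b0 power2_eq_iff_nonneg)
  then show ?thesis
    using ae b0 s11 s22 s21 by (simp add: vec_eq_iff forall_2 mat_def b_def)
qed

lemma msqrt_scalar:
  assumes "0 \<le> c"
  shows "msqrt (mat (of_real (c\<^sup>2))) = mat (of_real c)"
  unfolding msqrt_def
proof (rule the_equality)
  show "psd (mat (of_real c)) \<and> mat (of_real c) ** mat (of_real c) = (mat (of_real (c\<^sup>2)) :: qmat)"
    using psd_scalar[OF assms] by (simp add: qmat_entry_simps power2_eq_square)
qed (use psd_sqrt_scalar_unique assms in blast)

lemma traceless_hermitian_entries:
  assumes "adj D = D" "trace D = 0"
  shows "D$1$1 = of_real (Re (D$1$1))" "D$2$2 = - D$1$1" "D$2$1 = cnj (D$1$2)"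
proof -
  show "D$1$1 = of_real (Re (D$1$1))"
    by (rule hermitian_diag_real[OF assms(1)])
  show "D$2$1 = cnj (D$1$2)"
    by (rule hermitian_entry[OF assms(1)])
  show "D$2$2 = - D$1$1"
    using assms(2) by (simp add: trace_def sum_2 eq_neg_iff_add_eq_0 add.commute)
qed

lemma trace_norm_traceless_hermitian:
  assumes "adj D = D" "trace D = 0"
  shows "trace_norm D = 2 * sqrt ((Re (D$1$1))\<^sup>2 + (cmod (D$1$2))\<^sup>2)"
proof -
  define p q where "p = Re (D$1$1)" and "q = D$1$2"
  define c where "c = sqrt (p\<^sup>2 + (cmod q)\<^sup>2)"
  have c0: "0 \<le> c" and cc: "c\<^sup>2 = p\<^sup>2 + (cmod q)\<^sup>2"
    by (simp_all add: c_def)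
  note d = traceless_hermitian_entries[OF assms, folded p_def q_def]
  have "adj D ** D = mat (of_real (c\<^sup>2))"
    unfolding assms(1) cc
    by (simp add: qmat_entry_simps d q_def[symmetric] complex_eq_iff
        cmod_power2[unfolded power2_eq_square] power2_eq_square algebra_simps)
  then have "trace_norm D = Re (trace (mat (of_real c) :: qmat))"
    by (simp only: trace_norm_def msqrt_scalar[OF c0])
  also have "\<dots> = 2 * c"
    by (simp add: trace_def sum_2 mat_def)
  finally show ?thesis
    by (simp add: c_def p_def q_def)
qed

lemma qform_scaleR: "qform A (c *\<^sub>R v) = of_real (c\<^sup>2) * qform A v"
  unfolding vector_scaleR_component matrix_vector_mult_def
  by (simp add: scaleR_conv_of_real sum_distrib_left power2_eq_square algebra_simps)

lemma pmf_pmf_of_list_upt: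
  assumes "\<And>k. k < n \<Longrightarrow> 0 \<le> f k" "(\<Sum>k<n. f k) = 1"
  shows "pmf (pmf_of_list (map (\<lambda>k. (k, f k)) [0..<n])) k = (if k < n then f k else 0)"
proof -
  have "pmf_of_list_wf (map (\<lambda>k. (k, f k)) [0..<n])"
    using assms by (auto simp: pmf_of_list_wf_def o_def atLeast0LessThan
        simp flip: sum_set_upt_conv_sum_list_nat)
  moreover have "filter (\<lambda>j. j = k) [0..<n] = (if k < n then [k] else [])"
    by (induction n) auto
  ultimately show ?thesis
    by (simp add: pmf_pmf_of_list filter_map o_def)
qed

lemma prob_Pi_pmf_eq_sum_PiE:
  assumes "finite I" "finite A" "set_pmf p \<subseteq> A"
  shows "measure_pmf.prob (Pi_pmf I undefined (\<lambda>_. p)) {w. P w}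
           = (\<Sum>w\<in>{w \<in> PiE I (\<lambda>_. A). P w}. \<Prod>i\<in>I. pmf p (w i))"
proof -
  let ?P = "Pi_pmf I undefined (\<lambda>_. p)"
  have supp: "set_pmf ?P \<subseteq> PiE I (\<lambda>_. A)"
    using set_Pi_pmf_subset'[OF assms(1), of undefined "\<lambda>_. p"] assms(3)
    by (auto simp: PiE_dflt_def PiE_iff extensional_def)
  have "measure_pmf.prob ?P {w. P w} = measure_pmf.prob ?P ({w. P w} \<inter> set_pmf ?P)"
    by (simp add: measure_Int_set_pmf)
  also have "{w. P w} \<inter> set_pmf ?P = {w \<in> PiE I (\<lambda>_. A). P w} \<inter> set_pmf ?P"
    using supp by auto
  also have "measure_pmf.prob ?P \<dots> = (\<Sum>w\<in>{w \<in> PiE I (\<lambda>_. A). P w}. pmf ?P w)"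
    using assms by (simp add: measure_Int_set_pmf measure_measure_pmf_finite finite_PiE)
  also have "\<dots> = (\<Sum>w\<in>{w \<in> PiE I (\<lambda>_. A). P w}. \<Prod>i\<in>I. pmf p (w i))"
    using assms(1) by (intro sum.cong refl pmf_Pi') (auto simp: PiE_def extensional_def)
  finally show ?thesis .
qed

lemma Hoeffding_Pi_pmf:
  fixes h :: "'a \<Rightarrow> real" and a b :: real
  assumes "finite I" "I \<noteq> {}" "a < b" "\<And>x. h x \<in> {a..b}" "0 \<le> \<epsilon>"
  shows "measure_pmf.prob (Pi_pmf I d (\<lambda>_. p))
           {w. \<epsilon> \<le> \<bar>(\<Sum>i\<in>I. h (w i)) - real (card I) * measure_pmf.expectation p h\<bar>}
         \<le> 2 * exp (- 2 * \<epsilon>\<^sup>2 / (real (card I) * (b - a)\<^sup>2))"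
proof -
  let ?P = "Pi_pmf I d (\<lambda>_. p)"
  have expectation: "measure_pmf.expectation ?P (\<lambda>w. h (w i)) = measure_pmf.expectation p h"
    if "i \<in> I" for i
  proof -
    have "measure_pmf.expectation ?P (\<lambda>w. h (w i))
        = measure_pmf.expectation (map_pmf (\<lambda>w. w i) ?P) h"
      by simp
    also have "map_pmf (\<lambda>w. w i) ?P = p"
      using that assms(1) by (simp add: Pi_pmf_component)
    finally show ?thesis .
  qed
  interpret Hoeffding_ineq "measure_pmf ?P" I "\<lambda>i w. h (w i)" "\<lambda>_. a" "\<lambda>_. b"
    "\<Sum>i\<in>I. measure_pmf.expectation ?P (\<lambda>w. h (w i))"
  proof unfold_locales
    show "prob_space.indep_vars (measure_pmf ?P) (\<lambda>_. borel) (\<lambda>i w. h (w i)) I"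
      by (intro prob_space.indep_vars_compose2[OF _ indep_vars_Pi_pmf])
         (auto simp: measure_pmf.prob_space_axioms assms(1))
  qed (use assms in auto)
  have "(\<Sum>i\<in>I. (b - a)\<^sup>2) > 0"
    using assms(1-3) by (simp add: card_gt_0_iff)
  from Hoeffding_ineq_abs_ge[OF assms(5) this] show ?thesis
    by (simp add: expectation)
qed

lemma sum_lessThan_3: "(\<Sum>a<3. f a) = f 0 + f 1 + f (2::nat)"
  by (simp add: eval_nat_numeral)

lemma two_exp_neg_square_le:
  fixes r d \<delta> T :: real
  assumes "1 \<le> r" "d\<^sup>2 \<le> 27 * \<delta>\<^sup>2"
  shows "2 * exp (- (r * \<delta> - T)\<^sup>2 / 2) \<le> exp (- (r\<^sup>2 * d\<^sup>2) / 54 + (\<delta> * T + 1) * r)"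
proof -
  have "2 * exp (- (r * \<delta> - T)\<^sup>2 / 2) = exp (ln 2 - (r * \<delta> - T)\<^sup>2 / 2)"
    unfolding diff_conv_add_uminus[of "ln 2"] exp_add by simp
  also have "\<dots> \<le> exp (- (r\<^sup>2 * d\<^sup>2) / 54 + (\<delta> * T + 1) * r)"
  proof -
    have "ln 2 \<le> r"
      using ln_le_minus_one[of 2] assms(1) by simp
    moreover have "r\<^sup>2 * d\<^sup>2 \<le> 27 * (r\<^sup>2 * \<delta>\<^sup>2)"
      using mult_left_mono[OF assms(2), of "r\<^sup>2"] by simp
    moreover have "(r * \<delta> - T)\<^sup>2 = r\<^sup>2 * \<delta>\<^sup>2 - 2 * (\<delta> * T * r) + T\<^sup>2"
      and "(\<delta> * T + 1) * r = \<delta> * T * r + r"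
      by (simp_all add: power2_eq_square algebra_simps)
    ultimately show ?thesis
      unfolding exp_le_cancel_iff using zero_le_power2[of T] by linarith
  qed
  finally show ?thesis .
qed

(* Eigenvectors of Z, X and Y, the eigenvalue +1 before -1, scaled by 1 / sqrt 3.
   Indices k >= 6 lie outside the list and are never used. *)
definition pauli_vec :: "nat \<Rightarrow> complex^2" where
  "pauli_vec k = [vector [1, 0] /\<^sub>R sqrt 3, vector [0, 1] /\<^sub>R sqrt 3,
                  vector [1, 1] /\<^sub>R sqrt 6, vector [1, -1] /\<^sub>R sqrt 6,
                  vector [1, \<i>] /\<^sub>R sqrt 6, vector [1, -\<i>] /\<^sub>R sqrt 6] ! k"

definition pauli_effect :: "nat \<Rightarrow> qmat" where
  "pauli_effect k = outer (pauli_vec k)"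

definition pauli_prob :: "qmat \<Rightarrow> nat \<Rightarrow> real" where
  "pauli_prob s k = Re (trace (s ** pauli_effect k))"

(* Outcome k belongs to observable k div 2 and has eigenvalue (-1)^k, so pauli_mean s a is
   Tr (s P_a) / 3 with P_0 = Z, P_1 = X, P_2 = Y. *)
definition pauli_score :: "nat \<Rightarrow> nat \<Rightarrow> real" where
  "pauli_score a k = (if k = 2 * a then 1 else if k = 2 * a + 1 then -1 else 0)"

definition pauli_mean :: "qmat \<Rightarrow> nat \<Rightarrow> real" where
  "pauli_mean s a = pauli_prob s (2 * a) - pauli_prob s (2 * a + 1)"

lemma psd_pauli_effect: "psd (pauli_effect k)"
  by (simp add: pauli_effect_def psd_outer)

lemma sum_pauli_effect: "(\<Sum>k<6. pauli_effect k) = mat 1"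
  by (simp add: lessThan_nat_numeral pauli_effect_def pauli_vec_def outer_def qmat_entry_simps
      complex_eq_iff field_simps)

lemma pauli_prob_eq:
  "pauli_prob s 0 = Re (s$1$1) / 3" "pauli_prob s 1 = Re (s$2$2) / 3"
  "pauli_prob s 2 = Re (s$1$1 + s$1$2 + s$2$1 + s$2$2) / 6"
  "pauli_prob s 3 = Re (s$1$1 - s$1$2 - s$2$1 + s$2$2) / 6"
  "pauli_prob s 4 = Re (s$1$1 + \<i> * s$1$2 - \<i> * s$2$1 + s$2$2) / 6"
  "pauli_prob s 5 = Re (s$1$1 - \<i> * s$1$2 + \<i> * s$2$1 + s$2$2) / 6"
  by (simp_all add: pauli_prob_def pauli_effect_def trace_mult_outer pauli_vec_def qform_scaleR
      matrix_vector_mult_def sum_2 field_simps)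

lemma pauli_prob_nonneg: "psd s \<Longrightarrow> 0 \<le> pauli_prob s k"
  unfolding pauli_prob_def pauli_effect_def trace_mult_outer by (rule psd_qform_nonneg)

lemma sum_pauli_prob: "(\<Sum>k<6. pauli_prob s k) = Re (trace s)"
  by (simp add: lessThan_nat_numeral pauli_prob_eq pauli_prob_eq(2)[unfolded One_nat_def]
      trace_def sum_2 field_simps)

lemma pauli_prob_diff: "pauli_prob (A - B) k = pauli_prob A k - pauli_prob B k"
  by (simp add: pauli_prob_def pauli_effect_def trace_mult_outer matrix_vector_mult_diff_rdistrib
      right_diff_distrib sum_subtractf)

lemma pauli_mean_diff: "pauli_mean (A - B) a = pauli_mean A a - pauli_mean B a"
  by (simp add: pauli_mean_def pauli_prob_diff)

lemma pauli_mean_eq: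
  "pauli_mean s 0 = Re (s$1$1 - s$2$2) / 3"
  "pauli_mean s 1 = Re (s$1$2 + s$2$1) / 3"
  "pauli_mean s 2 = Im (s$2$1 - s$1$2) / 3"
proof -
  have "pauli_mean s 0 = pauli_prob s 0 - pauli_prob s 1"
    "pauli_mean s 1 = pauli_prob s 2 - pauli_prob s 3"
    "pauli_mean s 2 = pauli_prob s 4 - pauli_prob s 5"
    by (simp_all add: pauli_mean_def)
  then show "pauli_mean s 0 = Re (s$1$1 - s$2$2) / 3"
    "pauli_mean s 1 = Re (s$1$2 + s$2$1) / 3"
    "pauli_mean s 2 = Im (s$2$1 - s$1$2) / 3"
    unfolding pauli_prob_eq by (simp_all add: field_simps)
qed

lemma trace_norm_sq_eq_pauli_mean:
  assumes "adj D = D" "trace D = 0"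
  shows "(trace_norm D)\<^sup>2 = 9 * (\<Sum>a<3. (pauli_mean D a)\<^sup>2)"
proof -
  note d = traceless_hermitian_entries[OF assms]
  have m: "pauli_mean D 0 = 2 * Re (D$1$1) / 3" "pauli_mean D 1 = 2 * Re (D$1$2) / 3"
    "pauli_mean D 2 = - 2 * Im (D$1$2) / 3"
    unfolding pauli_mean_eq d(2,3) by simp_all
  show ?thesis
    unfolding sum_lessThan_3 trace_norm_traceless_hermitian[OF assms] m
    by (simp add: power_mult_distrib cmod_power2 power_divide)
qed

lemma density_diff_hermitian: "density \<rho> \<Longrightarrow> density \<sigma> \<Longrightarrow> adj (\<rho> - \<sigma>) = \<rho> - \<sigma>"
  using psd_hermitian by (auto simp: density_def adj_def vec_eq_iff)

lemma density_diff_traceless: "density \<rho> \<Longrightarrow> density \<sigma> \<Longrightarrow> trace (\<rho> - \<sigma>) = 0"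
  by (simp add: density_def trace_sub)

lemma exists_pauli_mean_gap:
  assumes "density \<rho>" "density \<sigma>"
  obtains a where "a < 3" "(trace_norm (\<rho> - \<sigma>))\<^sup>2 \<le> 27 * (pauli_mean \<rho> a - pauli_mean \<sigma> a)\<^sup>2"
proof -
  define x where "x a = (pauli_mean \<rho> a - pauli_mean \<sigma> a)\<^sup>2" for a
  have tn: "(trace_norm (\<rho> - \<sigma>))\<^sup>2 = 9 * (x 0 + x 1 + x 2)"
    using trace_norm_sq_eq_pauli_mean[OF density_diff_hermitian[OF assms] density_diff_traceless[OF assms]]
    by (simp add: x_def pauli_mean_diff sum_lessThan_3)
  consider "x 1 \<le> x 0 \<and> x 2 \<le> x 0" | "x 0 \<le> x 1 \<and> x 2 \<le> x 1" | "x 0 \<le> x 2 \<and> x 1 \<le> x 2"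
    by linarith
  then show ?thesis
    using that[of 0] that[of 1] that[of 2] unfolding tn x_def[symmetric] by cases auto
qed

definition pauli_outcomes :: "qmat \<Rightarrow> nat pmf" where
  "pauli_outcomes s = pmf_of_list (map (\<lambda>k. (k, pauli_prob s k)) [0..<6])"

lemma pmf_pauli_outcomes:
  assumes "density s"
  shows "pmf (pauli_outcomes s) k = (if k < 6 then pauli_prob s k else 0)"
  unfolding pauli_outcomes_def
  using assms by (intro pmf_pmf_of_list_upt) (auto simp: density_def pauli_prob_nonneg sum_pauli_prob)

lemma set_pauli_outcomes: "density s \<Longrightarrow> set_pmf (pauli_outcomes s) \<subseteq> {..<6}"
  by (auto simp: set_pmf_eq pmf_pauli_outcomes)

lemma expectation_pauli_score:
  assumes "density s" "a < 3"
  shows "measure_pmf.expectation (pauli_outcomes s) (pauli_score a) = pauli_mean s a"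
proof -
  have "measure_pmf.expectation (pauli_outcomes s) (pauli_score a)
      = (\<Sum>k\<in>{2 * a, 2 * a + 1}. pauli_score a k * pmf (pauli_outcomes s) k)"
    by (rule integral_measure_pmf_real) (auto simp: pauli_score_def split: if_splits)
  also have "\<dots> = pauli_mean s a"
    using assms by (simp add: pmf_pauli_outcomes pauli_score_def pauli_mean_def)
  finally show ?thesis .
qed

lemma out_prob_pauli:
  assumes "density s"
  shows "out_prob s m ((\<lambda>_. 6), (\<lambda>_. pauli_effect), g) b
           = measure_pmf.prob (Pi_pmf {..<m} undefined (\<lambda>_. pauli_outcomes s)) {w. g w = b}"
proof -
  have "out_prob s m ((\<lambda>_. 6), (\<lambda>_. pauli_effect), g) b
      = (\<Sum>w\<in>{w \<in> PiE {..<m} (\<lambda>_. {..<6}). g w = b}. \<Prod>i<m. pauli_prob s (w i))"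
    by (simp add: out_prob_def pauli_prob_def)
  also have "\<dots> = (\<Sum>w\<in>{w \<in> PiE {..<m} (\<lambda>_. {..<6}). g w = b}.
                      \<Prod>i<m. pmf (pauli_outcomes s) (w i))"
    using assms by (intro sum.cong prod.cong) (auto simp: pmf_pauli_outcomes PiE_iff)
  also have "\<dots> = measure_pmf.prob (Pi_pmf {..<m} undefined (\<lambda>_. pauli_outcomes s)) {w. g w = b}"
    using assms by (intro prob_Pi_pmf_eq_sum_PiE[symmetric] set_pauli_outcomes) auto
  finally show ?thesis .
qed

lemma pauli_score_deviation:
  assumes "density s" "a < 3" "0 < m" "0 \<le> \<epsilon>"
  shows "measure_pmf.prob (Pi_pmf {..<m} undefined (\<lambda>_. pauli_outcomes s))
           {w. \<epsilon> \<le> \<bar>(\<Sum>i<m. pauli_score a (w i)) - real m * pauli_mean s a\<bar>}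
         \<le> 2 * exp (- \<epsilon>\<^sup>2 / (2 * real m))"
proof -
  have "measure_pmf.prob (Pi_pmf {..<m} undefined (\<lambda>_. pauli_outcomes s))
          {w. \<epsilon> \<le> \<bar>(\<Sum>i<m. pauli_score a (w i))
                  - real (card {..<m}) * measure_pmf.expectation (pauli_outcomes s) (pauli_score a)\<bar>}
        \<le> 2 * exp (- 2 * \<epsilon>\<^sup>2 / (real (card {..<m}) * (1 - (- 1))\<^sup>2))"
    by (rule Hoeffding_Pi_pmf) (use assms in \<open>auto simp: pauli_score_def\<close>)
  then show ?thesis
    by (simp add: expectation_pauli_score[OF assms(1,2)])
qed

definition pauli_test_rejects :: "qmat \<Rightarrow> real \<Rightarrow> nat \<Rightarrow> (nat \<Rightarrow> nat) \<Rightarrow> bool" where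
  "pauli_test_rejects \<rho> T m w \<longleftrightarrow>
     (\<exists>a<3. T * sqrt (real m) \<le> \<bar>(\<Sum>i<m. pauli_score a (w i)) - real m * pauli_mean \<rho> a\<bar>)"

definition pauli_test :: "qmat \<Rightarrow> real \<Rightarrow> nat \<Rightarrow> indep_rule" where
  "pauli_test \<rho> T m = ((\<lambda>_. 6), (\<lambda>_. pauli_effect), pauli_test_rejects \<rho> T m)"

lemma is_indep_rule_pauli_test: "is_indep_rule m (pauli_test \<rho> T m)"
  by (simp add: is_indep_rule_def pauli_test_def psd_pauli_effect sum_pauli_effect)

lemma pauli_test_type1_err:
  assumes "density \<rho>" "0 < m" "0 \<le> T"
  shows "type1_err \<rho> m (pauli_test \<rho> T m) \<le> 6 * exp (- T\<^sup>2 / 2)"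
proof -
  let ?P = "Pi_pmf {..<m} undefined (\<lambda>_. pauli_outcomes \<rho>)"
  let ?dev = "\<lambda>a. {w. T * sqrt (real m) \<le> \<bar>(\<Sum>i<m. pauli_score a (w i)) - real m * pauli_mean \<rho> a\<bar>}"
  have "type1_err \<rho> m (pauli_test \<rho> T m) = measure_pmf.prob ?P (\<Union>a<3. ?dev a)"
    unfolding type1_err_def pauli_test_def out_prob_pauli[OF assms(1)]
    by (rule arg_cong[where f = "measure_pmf.prob ?P"]) (auto simp: pauli_test_rejects_def)
  also have "\<dots> \<le> (\<Sum>a<3. measure_pmf.prob ?P (?dev a))"
    by (rule measure_UNION_le) auto
  also have "\<dots> \<le> (\<Sum>a<3::nat. 2 * exp (- (T * sqrt (real m))\<^sup>2 / (2 * real m)))"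
    using assms by (intro sum_mono pauli_score_deviation) auto
  also have "\<dots> = 6 * exp (- T\<^sup>2 / 2)"
    using assms(2) by (simp add: power_mult_distrib)
  finally show ?thesis .
qed

lemma pauli_test_type2_err:
  assumes "density \<sigma>" "a < 3" "0 < m"
    and "T \<le> sqrt (real m) * \<bar>pauli_mean \<rho> a - pauli_mean \<sigma> a\<bar>"
  shows "type2_err \<sigma> m (pauli_test \<rho> T m)
           \<le> 2 * exp (- (sqrt (real m) * \<bar>pauli_mean \<rho> a - pauli_mean \<sigma> a\<bar> - T)\<^sup>2 / 2)"
proof -
  let ?P = "Pi_pmf {..<m} undefined (\<lambda>_. pauli_outcomes \<sigma>)"
  let ?S = "\<lambda>w. \<Sum>i<m. pauli_score a (w i)"
  define r \<delta> where "r = sqrt (real m)" and "\<delta> = \<bar>pauli_mean \<rho> a - pauli_mean \<sigma> a\<bar>"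
  define \<epsilon> where "\<epsilon> = r * (r * \<delta> - T)"
  have r2: "r\<^sup>2 = real m"
    by (simp add: r_def)
  have "0 \<le> \<epsilon>"
    using assms(4) by (simp add: \<epsilon>_def r_def \<delta>_def)
  have "{w. \<not> pauli_test_rejects \<rho> T m w} \<subseteq> {w. \<epsilon> \<le> \<bar>?S w - real m * pauli_mean \<sigma> a\<bar>}"
  proof safe
    fix w assume "\<not> pauli_test_rejects \<rho> T m w"
    then have "\<bar>?S w - real m * pauli_mean \<rho> a\<bar> < T * r"
      using assms(2) by (auto simp: pauli_test_rejects_def r_def)
    moreover have "real m * \<delta> = \<bar>real m * pauli_mean \<rho> a - real m * pauli_mean \<sigma> a\<bar>"
      by (simp add: \<delta>_def abs_mult flip: right_diff_distrib)
    ultimately show "\<epsilon> \<le> \<bar>?S w - real m * pauli_mean \<sigma> a\<bar>"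
      unfolding \<epsilon>_def r2[symmetric] by (simp add: power2_eq_square algebra_simps)
  qed
  then have "type2_err \<sigma> m (pauli_test \<rho> T m)
      \<le> measure_pmf.prob ?P {w. \<epsilon> \<le> \<bar>?S w - real m * pauli_mean \<sigma> a\<bar>}"
    unfolding type2_err_def pauli_test_def out_prob_pauli[OF assms(1)]
    by (intro measure_pmf.finite_measure_mono) auto
  also have "\<dots> \<le> 2 * exp (- \<epsilon>\<^sup>2 / (2 * real m))"
    using assms \<open>0 \<le> \<epsilon>\<close> by (intro pauli_score_deviation) auto
  also have "\<dots> = 2 * exp (- (r * \<delta> - T)\<^sup>2 / 2)"
    using assms(3) by (simp add: \<epsilon>_def power_mult_distrib r2)
  finally show ?thesis
    by (simp only: r_def \<delta>_def)
qed

lemma pauli_test_type2_err_le_1: "density \<sigma> \<Longrightarrow> type2_err \<sigma> m (pauli_test \<rho> T m) \<le> 1"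
  by (simp add: type2_err_def pauli_test_def out_prob_pauli)

lemma pauli_test_type2_err_asymptotic:
  assumes "density \<rho>" "density \<sigma>"
  shows "\<exists>K m0. \<forall>m\<ge>m0. type2_err \<sigma> m (pauli_test \<rho> T m)
           \<le> exp (- (real m * (trace_norm (\<rho> - \<sigma>))\<^sup>2) / 54 + K * sqrt (real m))"
proof -
  obtain a where a: "a < 3"
    and gap_a: "(trace_norm (\<rho> - \<sigma>))\<^sup>2 \<le> 27 * (pauli_mean \<rho> a - pauli_mean \<sigma> a)\<^sup>2"
    using exists_pauli_mean_gap[OF assms] .
  define d \<delta> where "d = trace_norm (\<rho> - \<sigma>)" and "\<delta> = \<bar>pauli_mean \<rho> a - pauli_mean \<sigma> a\<bar>"
  have gap: "d\<^sup>2 \<le> 27 * \<delta>\<^sup>2"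
    using gap_a by (simp add: d_def \<delta>_def)
  show ?thesis
  proof (cases "\<delta> = 0")
    case True
    then have "d = 0"
      using gap by simp
    then show ?thesis
      using pauli_test_type2_err_le_1[OF assms(2)] by (auto simp: d_def intro!: exI[of _ 0])
  next
    case False
    show ?thesis
    proof (intro exI[of _ "\<delta> * T + 1"] exI[of _ "max 1 (nat \<lceil>(T / \<delta>)\<^sup>2\<rceil>)"] allI impI)
      fix m :: nat
      assume m: "max 1 (nat \<lceil>(T / \<delta>)\<^sup>2\<rceil>) \<le> m"
      define r where "r = sqrt (real m)"
      have "1 \<le> r"
        using m by (simp add: r_def)
      have "(T / \<delta>)\<^sup>2 \<le> r\<^sup>2"
        using m by (simp add: r_def)
      then have "\<bar>T\<bar> \<le> \<bar>r * \<delta>\<bar>"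
        using False by (simp add: abs_le_square_iff power_divide power_mult_distrib field_simps)
      then have "T \<le> r * \<delta>"
        using \<open>1 \<le> r\<close> by (simp add: \<delta>_def abs_mult)
      then have "type2_err \<sigma> m (pauli_test \<rho> T m) \<le> 2 * exp (- (r * \<delta> - T)\<^sup>2 / 2)"
        using pauli_test_type2_err[OF assms(2) a] m by (simp add: r_def \<delta>_def)
      also have "\<dots> \<le> exp (- (r\<^sup>2 * d\<^sup>2) / 54 + (\<delta> * T + 1) * r)"
        using \<open>1 \<le> r\<close> gap by (rule two_exp_neg_square_le)
      finally show "type2_err \<sigma> m (pauli_test \<rho> T m)
          \<le> exp (- (real m * (trace_norm (\<rho> - \<sigma>))\<^sup>2) / 54 + (\<delta> * T + 1) * sqrt (real m))"
        by (simp add: r_def d_def)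
    qed
  qed
qed

theorem theorem2:
  fixes \<rho> :: qmat and \<alpha> :: real
  assumes "density \<rho>" and "0 < \<alpha>" and "\<alpha> < 1"
  shows "\<exists>M :: nat \<Rightarrow> indep_rule.
           (\<forall>m. is_indep_rule m (M m)) \<and>
           (\<exists>m0. \<forall>m\<ge>m0. type1_err \<rho> m (M m) \<le> \<alpha>) \<and>
           (\<forall>\<sigma>. density \<sigma> \<and> \<sigma> \<noteq> \<rho> \<longrightarrow>
              (\<exists>K::real. \<exists>m0. \<forall>m\<ge>m0.
                 type2_err \<sigma> m (M m) \<le>
                   exp (- (real m * (trace_norm (\<rho> - \<sigma>))\<^sup>2) / 54 + K * sqrt (real m))))"
proof -
  define T where "T = sqrt (2 * ln (6 / \<alpha>))"
  have "0 < ln (6 / \<alpha>)"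
    using assms(2,3) by simp
  then have "0 \<le> T" and "6 * exp (- T\<^sup>2 / 2) = \<alpha>"
    using assms(2) by (simp_all add: T_def exp_minus)
  then have "type1_err \<rho> m (pauli_test \<rho> T m) \<le> \<alpha>" if "1 \<le> m" for m
    using pauli_test_type1_err[OF assms(1), of m T] that by simp
  then show ?thesis
    using is_indep_rule_pauli_test pauli_test_type2_err_asymptotic[OF assms(1)] by blast
qed

end
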